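(* Let $\mathbf M=(\mathbb X,\mathbb U,\mathbb Y,x_0,\mathbf t,h)$ and $\widehat{\mathbf M}=(\hat{\mathbb X},\hat{\mathbb U},\mathbb Y,\hat x_0,\hat{\mathbf t},\hat h)$ be gMDPs with $\mathbf M\preceq^\delta_\epsilon\widehat{\mathbf M}$ via a relation $\mathcal R\subseteq\mathbb X\times\hat{\mathbb X}$, and let $\psi$ be an scLTL formula with DFA $\mathcal A_\psi=(Q,q_0,\Sigma,F,\tau)$. If $\hat V:\hat{\mathbb X}\times Q\to[0,1]$ and $V:\mathbb X\times Q\to[0,1]$ satisfy $\hat V(\hat x,q)\ge V(x,q)$ for all $(x,\hat x)\in\mathcal R$ and $q\in Q$, then $$\mathbf T^*_{-\epsilon,-\delta}(\hat V)(\hat x,q)\ge\mathbf T^*(V)(x,q)\qquad\forall(x,\hat x)\in\mathcal R,\ q\in Q.$$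
   Context: A gMDP is $(\mathbb X,\mathbb U,\mathbb Y,x_0,\mathbf t,h)$ with Polish state/input spaces, output space $\mathbb Y$ with metric $\mathbf d_{\mathbb Y}$, initial state, stochastic kernel $\mathbf t(\cdot\mid x,u)$ and measurable output map $h$. $\mathbf M\preceq^\delta_\epsilon\widehat{\mathbf M}$ means there exist an interface $\mathcal U_v:\mathbb U\times\mathbb X\times\hat{\mathbb X}\to\mathcal P(\hat{\mathbb U})$, a measurable relation $\mathcal R\subseteq\mathbb X\times\hat{\mathbb X}$ and a Borel kernel $\mathbb W_{\mathbf t}(\cdot\mid u,x,\hat x)$ on $\mathbb X\times\hat{\mathbb X}$ with $(x_0,\hat x_0)\in\mathcal R$ and, for all $(x,\hat x)\in\mathcal R$: $\mathbf d_{\mathbb Y}(h(x),\hat h(\hat x))\le\epsilon$, and for all $u\in\mathbb U$, $\mathbb W=\mathbb W_{\mathbf t}(\cdot\mid u,x,\hat x)$ has marginals $\mathbf t(\cdot\mid x,u)$ on $\mathbb X$ and $\hat{\mathbf t}(\cdot\mid\hat x,\mathcal U_v(u,x,\hat x))$ on $\hat{\mathbb X}$, and $\mathbb W(\mathcal R)\ge1-\delta$. $\Sigma=2^{\mathsf{AP}}$, $\mathsf L:\mathbb Y\to\Sigma$ measurable labelling, $\mathcal A_\psi$ a DFA (accepting set $F$, transition $\tau:Q\times\Sigma\to Q$) for $\psi$. For the product $\mathbf M\otimes\mathcal A_\psi$ (states $\mathbb X\times Q$, kernel $\bar{\mathbf t}(dx'\times\{q'\}\mid x,q,u)=\mathbf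 1_{\{q'\}}(\tau(q,\mathsf L(h(x'))))\mathbf t(dx'\mid x,u)$): $\mathbf T^\nu(V)(x,q)=\int\max\{\mathbf 1_F(q'),V(x',q')\}\bar{\mathbf t}(dx'\times\{q'\}\mid x,q,\nu(x,q))$ and $\mathbf T^*(V)=\sup_\nu\mathbf T^\nu(V)$ over policies $\nu:\mathbb X\times Q\to\mathcal P(\mathbb U)$. With $\mathcal N_\epsilon(y)=\{y'\in\mathbb Y:\mathbf d_{\mathbb Y}(y',y)\le\epsilon\}$ and $\bar\tau(q,\hat x')=\{\tau(q,\alpha):\alpha\in\mathsf L(\mathcal N_\epsilon(\hat h(\hat x')))\}$, the optimistic operator is $\mathbf T^*_{-\epsilon,-\delta}(\hat V)(\hat x,q)=\sup_\mu\mathbf L\big(\int_{\hat{\mathbb X}}\max_{q'\in\bar\tau(q,\hat x')}\max\{\mathbf 1_F(q'),\hat V(\hat x',q')\}\,\hat{\mathbf t}(d\hat x'\mid\hat x,\mu)+\delta\big)$, the supremum over inputs/input distributions $\mu$ of $\widehat{\mathbf M}$, with $\mathbf L(r)=\min(1,\max(0,r))$. *)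

theory Defs
  imports "HOL-Probability.Probability"
begin

text \<open>Probability distributions on a (Borel) space: P(A) = space (prob_algebra borel).
 A gMDP is represented by its kernel t :: 'x => 'u => 'x measure (t x u = t(.|x,u)),
 its output map h :: 'x => 'y and initial state x0.  Input distributions mu in P(U)
 act on the kernel by mu >>= t x.\<close>

definition is_kernel :: "('a::topological_space \<Rightarrow> 'b::topological_space \<Rightarrow> 'c::topological_space measure) \<Rightarrow> bool" where
  "is_kernel t \<longleftrightarrow>
     (\<lambda>p. t (fst p) (snd p)) \<in> (borel :: ('a \<times> 'b) measure) \<rightarrow>\<^sub>M prob_algebra (borel :: 'c measure)"

text \<open>Approximate simulation relation M <=^delta_eps M-hat, witnessed by interface Uv,
 measurable relation R and Borel coupling kernel W (W u x xh is a measure on X x X-hat).\<close>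

definition sim_rel ::
  "('x::polish_space \<Rightarrow> 'u::polish_space \<Rightarrow> 'x measure) \<Rightarrow> ('x \<Rightarrow> 'y::metric_space) \<Rightarrow> 'x \<Rightarrow>
   ('xh::polish_space \<Rightarrow> 'uh::polish_space \<Rightarrow> 'xh measure) \<Rightarrow> ('xh \<Rightarrow> 'y) \<Rightarrow> 'xh \<Rightarrow>
   real \<Rightarrow> real \<Rightarrow>
   ('u \<Rightarrow> 'x \<Rightarrow> 'xh \<Rightarrow> 'uh measure) \<Rightarrow> ('x \<times> 'xh) set \<Rightarrow>
   ('u \<Rightarrow> 'x \<Rightarrow> 'xh \<Rightarrow> ('x \<times> 'xh) measure) \<Rightarrow> bool" where
  "sim_rel t h x0 th hh xh0 \<epsilon> \<delta> Uv R W \<longleftrightarrow>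
     R \<in> sets (borel :: ('x \<times> 'xh) measure) \<and>
     (\<lambda>p. Uv (fst p) (fst (snd p)) (snd (snd p)))
        \<in> (borel :: ('u \<times> 'x \<times> 'xh) measure) \<rightarrow>\<^sub>M prob_algebra (borel :: 'uh measure) \<and>
     (\<lambda>p. W (fst p) (fst (snd p)) (snd (snd p)))
        \<in> (borel :: ('u \<times> 'x \<times> 'xh) measure) \<rightarrow>\<^sub>M prob_algebra (borel :: ('x \<times> 'xh) measure) \<and>
     (x0, xh0) \<in> R \<and>
     (\<forall>x xh. (x, xh) \<in> R \<longrightarrow>
        dist (h x) (hh xh) \<le> \<epsilon> \<and>
        (\<forall>u. distr (W u x xh) borel fst = t x u \<and>
             distr (W u x xh) borel snd = (Uv u x xh \<bind> th xh) \<and>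
             measure (W u x xh) R \<ge> 1 - \<delta>))"

definition approx_sim ::
  "('x::polish_space \<Rightarrow> 'u::polish_space \<Rightarrow> 'x measure) \<Rightarrow> ('x \<Rightarrow> 'y::metric_space) \<Rightarrow> 'x \<Rightarrow>
   ('xh::polish_space \<Rightarrow> 'uh::polish_space \<Rightarrow> 'xh measure) \<Rightarrow> ('xh \<Rightarrow> 'y) \<Rightarrow> 'xh \<Rightarrow>
   real \<Rightarrow> real \<Rightarrow> ('x \<times> 'xh) set \<Rightarrow> bool" where
  "approx_sim t h x0 th hh xh0 \<epsilon> \<delta> R \<longleftrightarrow>
     (\<exists>Uv W. sim_rel t h x0 th hh xh0 \<epsilon> \<delta> Uv R W)"

text \<open>Bellman operator T^nu on the product M (x) A_psi, policy nu : X x Q -> P(U).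
 The product kernel puts q' = tau q (L (h x')) deterministically.\<close>

definition T_pol ::
  "('x \<Rightarrow> 'u \<Rightarrow> 'x measure) \<Rightarrow> ('x \<Rightarrow> 'y) \<Rightarrow> ('y \<Rightarrow> 'ap set) \<Rightarrow>
   ('q \<Rightarrow> 'ap set \<Rightarrow> 'q) \<Rightarrow> 'q set \<Rightarrow>
   ('x \<Rightarrow> 'q \<Rightarrow> 'u measure) \<Rightarrow> ('x \<Rightarrow> 'q \<Rightarrow> real) \<Rightarrow> 'x \<Rightarrow> 'q \<Rightarrow> ennreal" where
  "T_pol t h L \<tau> F \<nu> V x q =
     (\<integral>\<^sup>+ x'. ennreal (max (indicator F (\<tau> q (L (h x')))) (V x' (\<tau> q (L (h x')))))
        \<partial>(\<nu> x q \<bind> t x))"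

definition T_star ::
  "('x \<Rightarrow> 'u::topological_space \<Rightarrow> 'x measure) \<Rightarrow> ('x \<Rightarrow> 'y) \<Rightarrow> ('y \<Rightarrow> 'ap set) \<Rightarrow>
   ('q \<Rightarrow> 'ap set \<Rightarrow> 'q) \<Rightarrow> 'q set \<Rightarrow>
   ('x \<Rightarrow> 'q \<Rightarrow> real) \<Rightarrow> 'x \<Rightarrow> 'q \<Rightarrow> ennreal" where
  "T_star t h L \<tau> F V x q =
     (\<Squnion>\<nu> \<in> {\<nu>. \<forall>x q. \<nu> x q \<in> space (prob_algebra borel)}. T_pol t h L \<tau> F \<nu> V x q)"

definition tau_bar ::
  "('q \<Rightarrow> 'ap set \<Rightarrow> 'q) \<Rightarrow> ('y::metric_space \<Rightarrow> 'ap set) \<Rightarrow> ('xh \<Rightarrow> 'y) \<Rightarrow> real \<Rightarrow>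
   'q \<Rightarrow> 'xh \<Rightarrow> 'q set" where
  "tau_bar \<tau> L hh \<epsilon> q xh' = {\<tau> q (L y') | y'. dist y' (hh xh') \<le> \<epsilon>}"

text \<open>Optimistic operator T^*_{-eps,-delta}; L(r) = min 1 (max 0 r), where the max with 0
 is automatic in ennreal.  The max over the finite set tau-bar is written as a Sup.\<close>

definition T_opt ::
  "('xh \<Rightarrow> 'uh::topological_space \<Rightarrow> 'xh measure) \<Rightarrow> ('xh \<Rightarrow> 'y::metric_space) \<Rightarrow> ('y \<Rightarrow> 'ap set) \<Rightarrow>
   ('q \<Rightarrow> 'ap set \<Rightarrow> 'q) \<Rightarrow> 'q set \<Rightarrow> real \<Rightarrow> real \<Rightarrow>
   ('xh \<Rightarrow> 'q \<Rightarrow> real) \<Rightarrow> 'xh \<Rightarrow> 'q \<Rightarrow> ennreal" where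
  "T_opt th hh L \<tau> F \<epsilon> \<delta> Vh xh q =
     (\<Squnion>\<mu> \<in> space (prob_algebra (borel :: 'uh measure)).
        min 1 ((\<integral>\<^sup>+ xh'. (\<Squnion>q' \<in> tau_bar \<tau> L hh \<epsilon> q xh'.
                   ennreal (max (indicator F q') (Vh xh' q'))) \<partial>(\<mu> \<bind> th xh))
               + ennreal \<delta>))"

end

theory Submission
  imports Defs
begin

text \<open>
  Fix a policy \<nu> and average the interface and the coupling kernel W over the input distribution
  \<nu> x q.  This gives an input distribution \<mu> for the abstract model and a coupling of the two
  successor distributions that puts mass at most \<delta> outside R.  On R the integrand of T_pol is
  dominated by that of the optimistic operator, because the output distance bound puts the
  concrete successor automaton state into \<tau>-bar and V \<le> V-hat there; off R it is at most 1,
  which costs the additive \<delta>.  No measurability of V, V-hat, h, h-hat or L is used: the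
  integrals are then lower integrals, and comparing them across the coupling needs a Borel
  minorant of the abstract integrand, which inner regularity provides because the projection of
  a compact set is compact, hence Borel.
\<close>

lemma borel_inner_approx_sigma_compact:
  fixes M :: "'a::{second_countable_topology, complete_space} measure"
  assumes sb: "sets M = sets borel" and fin: "emeasure M (space M) \<noteq> \<infinity>"
    and C: "C \<in> sets borel"
  obtains K :: "nat \<Rightarrow> 'a set"
  where "\<And>n. compact (K n)" "\<And>n. K n \<subseteq> C" "emeasure M (C - (\<Union>n. K n)) = 0"
proof -
  interpret finite_measure M by (rule finite_measureI) (use fin in auto)
  have "\<exists>K. compact K \<and> K \<subseteq> C \<and> measure M C < measure M K + 1 / Suc n" for n
  proof (cases "measure M C < 1 / Suc n")
    case False
    then have "ennreal (measure M C - 1 / Suc n) < ennreal (measure M C)"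
      by (intro ennreal_lessI) (auto intro: less_le_trans[of 0 "1 / Suc n"])
    also have "\<dots> = (SUP K \<in> {K. K \<subseteq> C \<and> compact K}. emeasure M K)"
      using inner_regular[OF sb fin C] by (simp add: emeasure_eq_measure)
    finally obtain K where "K \<subseteq> C" "compact K" "ennreal (measure M C - 1 / Suc n) < emeasure M K"
      by (auto simp: less_SUP_iff)
    then show ?thesis
      using False by (intro exI[of _ K]) (auto simp: emeasure_eq_measure ennreal_less_iff)
  qed (intro exI[of _ "{}"]; simp)
  then obtain K where K: "\<And>n. compact (K n)" "\<And>n. K n \<subseteq> C"
    and K_large: "\<And>n. measure M C < measure M (K n) + 1 / Suc n"
    by metis
  have K_sets: "K n \<in> sets M" for n
    using K(1) by (simp add: sb borel_closed compact_imp_closed)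
  have "measure M (C - (\<Union>n. K n)) \<le> 1 / Suc n" for n
  proof -
    have "measure M (C - (\<Union>n. K n)) \<le> measure M (C - K n)"
      using C K_sets sb by (intro finite_measure_mono) auto
    also have "\<dots> = measure M C - measure M (K n)"
      using C K K_sets sb by (intro finite_measure_Diff) auto
    finally show ?thesis using K_large[of n] by linarith
  qed
  then have "measure M (C - (\<Union>n. K n)) \<le> 0"
    by (intro LIMSEQ_le_const[OF LIMSEQ_Suc[OF lim_inverse_n']]) (auto simp: inverse_eq_divide)
  then show ?thesis
    using that[of K] K by (simp add: emeasure_eq_measure antisym)
qed

lemma simple_function_AE_sigma_compact_levels:
  fixes M :: "'a::{second_countable_topology, complete_space} measure"
  assumes sb: "sets M = sets borel" and fin: "emeasure M (space M) \<noteq> \<infinity>"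
    and s: "simple_function M s"
  obtains K :: "'b \<Rightarrow> nat \<Rightarrow> 'a set"
  where "\<And>c n. compact (K c n)" "\<And>c n. K c n \<subseteq> s -` {c}" "AE p in M. \<exists>n. p \<in> K (s p) n"
proof -
  have space_M: "space M = UNIV"
    using sets_eq_imp_space_eq[OF sb] by simp
  have s_fin: "finite (range s)"
    using s space_M by (simp add: simple_function_def)
  have s_level: "s -` {c} \<in> sets borel" for c
    using simple_functionD(2)[OF s, of "{c}"] space_M sb by simp
  have "\<exists>Kc :: nat \<Rightarrow> 'a set. (\<forall>n. compact (Kc n) \<and> Kc n \<subseteq> s -` {c}) \<and>
      emeasure M (s -` {c} - (\<Union>n. Kc n)) = 0" for c
    by (rule borel_inner_approx_sigma_compact[OF sb fin s_level[of c]]) blast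
  then obtain K :: "'b \<Rightarrow> nat \<Rightarrow> 'a set"
    where K: "\<And>c n. compact (K c n)" "\<And>c n. K c n \<subseteq> s -` {c}"
      and K_null: "\<And>c. emeasure M (s -` {c} - (\<Union>n. K c n)) = 0"
    by metis
  have K_sets: "K c n \<in> sets M" for c n
    using K(1) by (simp add: sb borel_closed compact_imp_closed)
  have "(\<Union>c \<in> range s. s -` {c} - (\<Union>n. K c n)) \<in> null_sets M"
    using K_null K_sets s_level sb by (intro null_sets_UN' countable_finite[OF s_fin] null_setsI) auto
  then have "AE p in M. \<exists>n. p \<in> K (s p) n"
    by (rule AE_I') blast
  with K show ?thesis
    by (rule that)
qed

lemma simple_function_AE_le_borel_minorant:
  fixes M :: "'a::{second_countable_topology, complete_space} measure" and \<phi> :: "'a \<Rightarrow> 'b::t2_space"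
    and s :: "'a \<Rightarrow> ennreal" and g :: "'b \<Rightarrow> ennreal"
  assumes sb: "sets M = sets borel" and fin: "emeasure M (space M) \<noteq> \<infinity>"
    and s: "simple_function M s" and \<phi>: "continuous_on UNIV \<phi>" and sg: "\<And>p. s p \<le> g (\<phi> p)"
  obtains g' where "g' \<in> borel_measurable borel" "\<And>y. g' y \<le> g y" "AE p in M. s p \<le> g' (\<phi> p)"
proof -
  obtain K :: "ennreal \<Rightarrow> nat \<Rightarrow> 'a set"
    where K: "\<And>c n. compact (K c n)" "\<And>c n. K c n \<subseteq> s -` {c}"
      and K_ae: "AE p in M. \<exists>n. p \<in> K (s p) n"
    using simple_function_AE_sigma_compact_levels[OF sb fin s] by blast
  have s_fin: "finite (range s)"
    using s sets_eq_imp_space_eq[OF sb] by (simp add: simple_function_def)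
  have \<phi>_K: "\<phi> ` K c n \<in> sets borel" for c n
    using K(1) \<phi> by (intro borel_closed compact_imp_closed compact_continuous_image)
      (auto intro: continuous_on_subset)
  define g' where "g' y = (SUP c \<in> range s. c * indicator (\<Union>n. \<phi> ` K c n) y)" for y
  have g'_meas: "g' \<in> borel_measurable borel"
    unfolding g'_def using \<phi>_K
    by (intro borel_measurable_SUP countable_finite[OF s_fin] borel_measurable_times_ennreal
        borel_measurable_const borel_measurable_indicator) auto
  have g'_le: "g' y \<le> g y" for y
    unfolding g'_def
  proof (rule SUP_least)
    fix c assume "c \<in> range s"
    show "c * indicator (\<Union>n. \<phi> ` K c n) y \<le> g y"
    proof (cases "y \<in> (\<Union>n. \<phi> ` K c n)")
      case True
      then obtain p where "s p = c" "\<phi> p = y"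
        using K(2) by blast
      then show ?thesis
        using True sg[of p] by simp
    qed simp
  qed
  have s_le_g': "s p \<le> g' (\<phi> p)" if "p \<in> K (s p) n" for p n
  proof -
    have "\<phi> p \<in> (\<Union>n. \<phi> ` K (s p) n)"
      using that by blast
    then show ?thesis
      unfolding g'_def by (intro SUP_upper2[of "s p"]) auto
  qed
  have "AE p in M. s p \<le> g' (\<phi> p)"
    by (rule AE_mp[OF K_ae], intro AE_I2 impI) (blast intro: s_le_g')
  with g'_meas g'_le show ?thesis
    by (rule that)
qed

text \<open>Both integrands may be non-measurable (lower integrals); for Borel g this would be
  immediate from nn_integral_distr.\<close>

lemma nn_integral_le_nn_integral_distr:
  fixes M :: "'a::{second_countable_topology, complete_space} measure" and \<phi> :: "'a \<Rightarrow> 'b::t2_space"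
    and k :: "'a \<Rightarrow> ennreal" and g :: "'b \<Rightarrow> ennreal"
  assumes sb: "sets M = sets borel" and fin: "emeasure M (space M) \<noteq> \<infinity>"
    and \<phi>: "continuous_on UNIV \<phi>" and kg: "\<And>p. k p \<le> g (\<phi> p)"
  shows "(\<integral>\<^sup>+p. k p \<partial>M) \<le> (\<integral>\<^sup>+y. g y \<partial>distr M borel \<phi>)"
  unfolding nn_integral_def[of M k]
proof (rule SUP_least, clarify)
  fix s assume s: "simple_function M s" "s \<le> k"
  have sg: "s p \<le> g (\<phi> p)" for p
    using le_funD[OF s(2)] kg by (rule order_trans)
  obtain g' where g': "g' \<in> borel_measurable borel" "\<And>y. g' y \<le> g y"
    and ae: "AE p in M. s p \<le> g' (\<phi> p)"
    using simple_function_AE_le_borel_minorant[OF sb fin s(1) \<phi> sg] by blast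
  have "integral\<^sup>S M s = (\<integral>\<^sup>+p. s p \<partial>M)"
    by (rule nn_integral_eq_simple_integral[OF s(1), symmetric])
  also have "\<dots> \<le> (\<integral>\<^sup>+p. g' (\<phi> p) \<partial>M)"
    by (rule nn_integral_mono_AE[OF ae])
  also have "\<dots> = (\<integral>\<^sup>+y. g' y \<partial>distr M borel \<phi>)"
    using \<phi> g'(1) by (intro nn_integral_distr[symmetric])
      (auto simp: measurable_cong_sets[OF sb refl] intro: borel_measurable_continuous_onI)
  also have "\<dots> \<le> (\<integral>\<^sup>+y. g y \<partial>distr M borel \<phi>)"
    by (intro nn_integral_mono g'(2))
  finally show "integral\<^sup>S M s \<le> (\<integral>\<^sup>+y. g y \<partial>distr M borel \<phi>)" .
qed

lemma nn_integral_distr_fst_le_distr_snd: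
  fixes W :: "('a::polish_space \<times> 'b::polish_space) measure"
    and f :: "'a \<Rightarrow> ennreal" and g :: "'b \<Rightarrow> ennreal"
  assumes sb: "sets W = sets borel" and fin: "emeasure W (space W) \<noteq> \<infinity>"
    and R: "R \<in> sets borel"
    and f_le_1: "\<And>a. f a \<le> 1" and fg: "\<And>a b. (a, b) \<in> R \<Longrightarrow> f a \<le> g b"
  shows "(\<integral>\<^sup>+a. f a \<partial>distr W borel fst) \<le> (\<integral>\<^sup>+b. g b \<partial>distr W borel snd) + emeasure W (- R)"
  unfolding nn_integral_def[of "distr W borel fst" f]
proof (rule SUP_least, clarify)
  fix s assume s: "simple_function (distr W borel fst) s" "s \<le> f"
  have s_meas: "s \<in> borel_measurable borel"
    using borel_measurable_simple_function[OF s(1)] by (simp cong: measurable_cong_sets)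
  have fst_meas: "fst \<in> W \<rightarrow>\<^sub>M borel"
    by (simp add: measurable_cong_sets[OF sb refl] borel_measurable_continuous_onI continuous_on_fst)
  have s_le: "s (fst p) \<le> s (fst p) * indicator R p + indicator (- R) p" for p
    using order_trans[OF le_funD[OF s(2)] f_le_1] by (cases "p \<in> R") auto
  have "integral\<^sup>S (distr W borel fst) s = (\<integral>\<^sup>+a. s a \<partial>distr W borel fst)"
    by (rule nn_integral_eq_simple_integral[OF s(1), symmetric])
  also have "\<dots> = (\<integral>\<^sup>+p. s (fst p) \<partial>W)"
    by (rule nn_integral_distr) (use fst_meas s_meas in auto)
  also have "\<dots> \<le> (\<integral>\<^sup>+p. s (fst p) * indicator R p + indicator (- R) p \<partial>W)"
    by (intro nn_integral_mono s_le)
  also have "\<dots> = (\<integral>\<^sup>+p. s (fst p) * indicator R p \<partial>W) + emeasure W (- R)"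
  proof -
    have R_W: "R \<in> sets W" "- R \<in> sets W"
      using R sets.compl_sets[of R W] sets_eq_imp_space_eq[OF sb] by (auto simp: sb)
    show ?thesis
      using R_W measurable_compose[OF fst_meas s_meas]
      by (subst nn_integral_add) (auto intro: borel_measurable_times_ennreal)
  qed
  also have "\<dots> \<le> (\<integral>\<^sup>+b. g b \<partial>distr W borel snd) + emeasure W (- R)"
  proof (intro add_mono order_refl nn_integral_le_nn_integral_distr[OF sb fin])
    show "s (fst p) * indicator R p \<le> g (snd p)" for p
      using order_trans[OF le_funD[OF s(2)] fg[of "fst p" "snd p"]] by (cases "p \<in> R") auto
  qed (intro continuous_on_snd continuous_on_id)
  finally show "integral\<^sup>S (distr W borel fst) s \<le> (\<integral>\<^sup>+b. g b \<partial>distr W borel snd) + emeasure W (- R)" .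
qed

lemma is_kernel_section:
  assumes "is_kernel t"
  shows "t x \<in> borel \<rightarrow>\<^sub>M prob_algebra borel"
proof -
  have "(\<lambda>u. (x, u)) \<in> borel_measurable borel"
    by (intro borel_measurable_continuous_onI continuous_intros)
  from measurable_compose[OF this assms[unfolded is_kernel_def]] show ?thesis
    by (simp only: fst_conv snd_conv)
qed

lemma bind_in_space_prob_algebra:
  assumes "A \<in> space (prob_algebra M)" and "B \<in> M \<rightarrow>\<^sub>M prob_algebra N"
  shows "A \<bind> B \<in> space (prob_algebra N)"
  using prob_space_bind'[OF assms] sets_bind'[OF assms] by (simp add: space_prob_algebra)

lemma emeasure_bind_prob_algebra_le:
  assumes A: "A \<in> space (prob_algebra M)" and B: "B \<in> M \<rightarrow>\<^sub>M prob_algebra N"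
    and X: "X \<in> sets N" and le: "\<And>x. emeasure (B x) X \<le> c"
  shows "emeasure (A \<bind> B) X \<le> c"
proof -
  have "emeasure (A \<bind> B) X = (\<integral>\<^sup>+x. emeasure (B x) X \<partial>A)"
    by (rule emeasure_bind_prob_algebra[OF A B X])
  also have "\<dots> \<le> (\<integral>\<^sup>+x. c \<partial>A)"
    by (intro nn_integral_mono le)
  also have "\<dots> = c"
    using A by (simp add: space_prob_algebra prob_space.emeasure_space_1)
  finally show ?thesis .
qed

lemma sim_rel_measurable_slices:
  assumes "sim_rel t h x0 th hh xh0 \<epsilon> \<delta> Uv R W"
  shows "(\<lambda>u. W u x xh) \<in> borel \<rightarrow>\<^sub>M prob_algebra borel"
    and "(\<lambda>u. Uv u x xh) \<in> borel \<rightarrow>\<^sub>M prob_algebra borel"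
proof -
  have slice: "(\<lambda>u. (u, x, xh)) \<in> borel_measurable borel"
    by (intro borel_measurable_continuous_onI continuous_intros)
  show "(\<lambda>u. W u x xh) \<in> borel \<rightarrow>\<^sub>M prob_algebra borel"
    using measurable_compose[OF slice, of "\<lambda>p. W (fst p) (fst (snd p)) (snd (snd p))"] assms
    by (simp add: sim_rel_def)
  show "(\<lambda>u. Uv u x xh) \<in> borel \<rightarrow>\<^sub>M prob_algebra borel"
    using measurable_compose[OF slice, of "\<lambda>p. Uv (fst p) (fst (snd p)) (snd (snd p))"] assms
    by (simp add: sim_rel_def)
qed

lemma sim_rel_emeasure_compl_le:
  assumes sim: "sim_rel t h x0 th hh xh0 \<epsilon> \<delta> Uv R W" and xR: "(x, xh) \<in> R"
  shows "emeasure (W u x xh) (- R) \<le> ennreal \<delta>"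
proof -
  have "W u x xh \<in> space (prob_algebra borel)"
    using measurable_space[OF sim_rel_measurable_slices(1)[OF sim]] by simp
  then interpret prob_space "W u x xh"
    by (simp add: space_prob_algebra)
  have sets_W: "sets (W u x xh) = sets borel"
    using \<open>W u x xh \<in> space (prob_algebra borel)\<close> by (simp add: space_prob_algebra)
  have R: "R \<in> events"
    using sim sets_W by (simp add: sim_rel_def)
  have "- R = space (W u x xh) - R"
    using sets_eq_imp_space_eq[OF sets_W] by (simp add: Compl_eq_Diff_UNIV)
  then have "emeasure (W u x xh) (- R) = ennreal (1 - prob R)"
    using prob_compl[OF R] by (simp add: emeasure_eq_measure)
  also have "\<dots> \<le> ennreal \<delta>"
  proof (rule ennreal_leI)
    have "1 - \<delta> \<le> prob R"
      using sim xR unfolding sim_rel_def by blast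
    then show "1 - prob R \<le> \<delta>"
      by linarith
  qed
  finally show ?thesis .
qed

lemma sim_rel_bind_coupling:
  assumes sim: "sim_rel t h x0 th hh xh0 \<epsilon> \<delta> Uv R W" and xR: "(x, xh) \<in> R"
    and th: "is_kernel th" and \<nu>: "\<nu> \<in> space (prob_algebra borel)"
  defines "W\<nu> \<equiv> \<nu> \<bind> (\<lambda>u. W u x xh)" and "\<mu> \<equiv> \<nu> \<bind> (\<lambda>u. Uv u x xh)"
  shows "W\<nu> \<in> space (prob_algebra borel)" and "\<mu> \<in> space (prob_algebra borel)"
    and "distr W\<nu> borel fst = \<nu> \<bind> t x"
    and "distr W\<nu> borel snd = \<mu> \<bind> th xh"
    and "emeasure W\<nu> (- R) \<le> ennreal \<delta>"
proof -
  have R: "R \<in> sets borel"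
    and marginals: "\<And>u. distr (W u x xh) borel fst = t x u \<and>
        distr (W u x xh) borel snd = (Uv u x xh \<bind> th xh)"
    using sim xR unfolding sim_rel_def by blast+
  note W_meas = sim_rel_measurable_slices(1)[OF sim]
    and Uv_meas = sim_rel_measurable_slices(2)[OF sim]
  have \<nu>_sets: "sets \<nu> = sets borel" and \<nu>_ne: "space \<nu> \<noteq> {}"
    using \<nu> by (auto simp: space_prob_algebra dest: prob_space.not_empty)
  have W_sub: "(\<lambda>u. W u x xh) \<in> \<nu> \<rightarrow>\<^sub>M subprob_algebra borel"
    using measurable_prob_algebraD[OF W_meas] by (simp add: measurable_cong_sets[OF \<nu>_sets refl])
  have proj_meas: "fst \<in> borel_measurable borel" "snd \<in> borel_measurable borel"
    by (intro borel_measurable_continuous_onI continuous_on_fst continuous_on_snd continuous_on_id)+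
  show "W\<nu> \<in> space (prob_algebra borel)"
    unfolding W\<nu>_def by (rule bind_in_space_prob_algebra[OF \<nu> W_meas])
  show "\<mu> \<in> space (prob_algebra borel)"
    unfolding \<mu>_def by (rule bind_in_space_prob_algebra[OF \<nu> Uv_meas])
  show "distr W\<nu> borel fst = \<nu> \<bind> t x"
    unfolding W\<nu>_def distr_bind[OF W_sub \<nu>_ne proj_meas(1)] using marginals by simp
  have "distr W\<nu> borel snd = \<nu> \<bind> (\<lambda>u. Uv u x xh \<bind> th xh)"
    unfolding W\<nu>_def distr_bind[OF W_sub \<nu>_ne proj_meas(2)] using marginals by simp
  also have "\<dots> = \<mu> \<bind> th xh"
    unfolding \<mu>_def
    using measurable_prob_algebraD[OF Uv_meas] measurable_prob_algebraD[OF is_kernel_section[OF th]]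
    by (subst bind_assoc) (simp_all add: measurable_cong_sets[OF \<nu>_sets refl])
  finally show "distr W\<nu> borel snd = \<mu> \<bind> th xh" .
  show "emeasure W\<nu> (- R) \<le> ennreal \<delta>"
    unfolding W\<nu>_def using R sim_rel_emeasure_compl_le[OF sim xR]
    by (intro emeasure_bind_prob_algebra_le[OF \<nu> W_meas]) auto
qed

lemma T_pol_le_1:
  assumes "prob_space (\<nu> x q \<bind> t x)" and "\<And>x q. V x q \<le> 1"
  shows "T_pol t h L \<tau> F \<nu> V x q \<le> 1"
proof -
  have "T_pol t h L \<tau> F \<nu> V x q \<le> (\<integral>\<^sup>+x'. 1 \<partial>(\<nu> x q \<bind> t x))"
    unfolding T_pol_def using assms(2) by (intro nn_integral_mono) (simp add: indicator_def)
  also have "\<dots> = 1"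
    using prob_space.emeasure_space_1[OF assms(1)] by simp
  finally show ?thesis .
qed

lemma sim_rel_tau_in_tau_bar:
  assumes "sim_rel t h x0 th hh xh0 \<epsilon> \<delta> Uv R W" and "(x, xh) \<in> R"
  shows "\<tau> q (L (h x)) \<in> tau_bar \<tau> L hh \<epsilon> q xh"
  using assms unfolding sim_rel_def tau_bar_def by blast

lemma T_pol_le_T_opt:
  fixes \<nu> :: "'x::polish_space \<Rightarrow> 'q \<Rightarrow> 'u::polish_space measure"
  assumes sim: "sim_rel t h x0 th hh xh0 \<epsilon> \<delta> Uv R W" and xR: "(x, xh) \<in> R"
    and th: "is_kernel th" and \<nu>: "\<nu> x q \<in> space (prob_algebra borel)"
    and V_le_1: "\<And>x q. V x q \<le> 1"
    and dom: "\<And>x xh q. (x, xh) \<in> R \<Longrightarrow> V x q \<le> Vh xh q"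
  shows "T_pol t h L \<tau> F \<nu> V x q \<le> T_opt th hh L \<tau> F \<epsilon> \<delta> Vh xh q"
proof -
  define W\<nu> where "W\<nu> = \<nu> x q \<bind> (\<lambda>u. W u x xh)"
  define \<mu> where "\<mu> = \<nu> x q \<bind> (\<lambda>u. Uv u x xh)"
  define f where "f x' = ennreal (max (indicator F (\<tau> q (L (h x')))) (V x' (\<tau> q (L (h x')))))" for x'
  define g where "g xh' = (\<Squnion>q' \<in> tau_bar \<tau> L hh \<epsilon> q xh'. ennreal (max (indicator F q') (Vh xh' q')))"
    for xh'
  note coupling = sim_rel_bind_coupling[OF sim xR th \<nu>, folded W\<nu>_def \<mu>_def]
  have W\<nu>: "prob_space W\<nu>" "sets W\<nu> = sets borel"
    using coupling(1) by (auto simp: space_prob_algebra)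
  have W\<nu>_finite: "emeasure W\<nu> (space W\<nu>) \<noteq> \<infinity>"
    using prob_space.emeasure_space_1[OF W\<nu>(1)] by simp
  have fst_meas: "fst \<in> W\<nu> \<rightarrow>\<^sub>M borel"
    by (simp add: measurable_cong_sets[OF W\<nu>(2) refl] borel_measurable_continuous_onI continuous_on_fst)
  have R: "R \<in> sets borel"
    using sim by (simp add: sim_rel_def)
  have f_le_1: "f a \<le> 1" for a
    using V_le_1 by (simp add: f_def indicator_def)
  have f_le_g: "f a \<le> g b" if ab: "(a, b) \<in> R" for a b
    unfolding f_def g_def using sim_rel_tau_in_tau_bar[OF sim ab] dom[OF ab]
    by (intro SUP_upper2[where i="\<tau> q (L (h a))"] ennreal_leI max.mono) auto
  have T_pol_eq: "T_pol t h L \<tau> F \<nu> V x q = (\<integral>\<^sup>+x'. f x' \<partial>distr W\<nu> borel fst)"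
    unfolding T_pol_def f_def coupling(3) ..
  have T_pol_bounded: "T_pol t h L \<tau> F \<nu> V x q \<le> 1"
    using prob_space.prob_space_distr[OF W\<nu>(1) fst_meas] V_le_1
    unfolding coupling(3) by (rule T_pol_le_1)
  have "T_pol t h L \<tau> F \<nu> V x q \<le> (\<integral>\<^sup>+xh'. g xh' \<partial>distr W\<nu> borel snd) + emeasure W\<nu> (- R)"
    unfolding T_pol_eq by (rule nn_integral_distr_fst_le_distr_snd[OF W\<nu>(2) W\<nu>_finite R f_le_1 f_le_g])
  also have "\<dots> \<le> (\<integral>\<^sup>+xh'. g xh' \<partial>(\<mu> \<bind> th xh)) + ennreal \<delta>"
    unfolding coupling(4) using coupling(5) by (rule add_left_mono)
  finally have "T_pol t h L \<tau> F \<nu> V x q \<le> min 1 ((\<integral>\<^sup>+xh'. g xh' \<partial>(\<mu> \<bind> th xh)) + ennreal \<delta>)"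
    using T_pol_bounded by simp
  also have "\<dots> \<le> T_opt th hh L \<tau> F \<epsilon> \<delta> Vh xh q"
    unfolding T_opt_def g_def by (rule SUP_upper[OF coupling(2)])
  finally show ?thesis .
qed

theorem lemma4:
  fixes t :: "'x::polish_space \<Rightarrow> 'u::polish_space \<Rightarrow> 'x measure"
    and h :: "'x \<Rightarrow> 'y::metric_space" and x0 :: 'x
    and th :: "'xh::polish_space \<Rightarrow> 'uh::polish_space \<Rightarrow> 'xh measure"
    and hh :: "'xh \<Rightarrow> 'y" and xh0 :: 'xh
    and \<epsilon> \<delta> :: real and R :: "('x \<times> 'xh) set"
    and L :: "'y \<Rightarrow> 'ap set"
    and q0 :: "'q::finite" and F :: "'q set" and \<tau> :: "'q \<Rightarrow> 'ap set \<Rightarrow> 'q"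
    and V :: "'x \<Rightarrow> 'q \<Rightarrow> real" and Vh :: "'xh \<Rightarrow> 'q \<Rightarrow> real"
  assumes t_kernel: "is_kernel t"
    and th_kernel: "is_kernel th"
    and h_meas: "h \<in> borel_measurable borel"
    and hh_meas: "hh \<in> borel_measurable borel"
    and L_meas: "L \<in> borel \<rightarrow>\<^sub>M count_space UNIV"
    and sim: "approx_sim t h x0 th hh xh0 \<epsilon> \<delta> R"
    and V_range: "\<And>x q. 0 \<le> V x q \<and> V x q \<le> 1"
    and Vh_range: "\<And>xh q. 0 \<le> Vh xh q \<and> Vh xh q \<le> 1"
    and dom: "\<And>x xh q. (x, xh) \<in> R \<Longrightarrow> Vh xh q \<ge> V x q"
  shows "\<forall>x xh q. (x, xh) \<in> R \<longrightarrow>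
           T_opt th hh L \<tau> F \<epsilon> \<delta> Vh xh q \<ge> T_star t h L \<tau> F V x q"
proof (intro allI impI)
  fix x xh q assume xR: "(x, xh) \<in> R"
  obtain Uv W where rel: "sim_rel t h x0 th hh xh0 \<epsilon> \<delta> Uv R W"
    using sim unfolding approx_sim_def by blast
  show "T_star t h L \<tau> F V x q \<le> T_opt th hh L \<tau> F \<epsilon> \<delta> Vh xh q"
    unfolding T_star_def
  proof (rule SUP_least)
    fix \<nu> :: "'x \<Rightarrow> 'q \<Rightarrow> 'u measure"
    assume "\<nu> \<in> {\<nu>. \<forall>x q. \<nu> x q \<in> space (prob_algebra borel)}"
    then have "\<nu> x q \<in> space (prob_algebra borel)"
      by blast
    moreover have "\<And>x q. V x q \<le> 1"
      using V_range by blast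
    ultimately show "T_pol t h L \<tau> F \<nu> V x q \<le> T_opt th hh L \<tau> F \<epsilon> \<delta> Vh xh q"
      by (rule T_pol_le_T_opt[OF rel xR th_kernel _ _ dom])
  qed
qed

end
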